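(* Let $\mathcal{LS}_{\mathfrak{B}_1}\langle X\rangle$ be the free algebra over a field of characteristic $0$ in the variety of left-symmetric algebras satisfying $(ab)c-(ba)c-(ac)b+(ca)b+(bc)a-(cb)a=0$, and equip it with the anticommutator $\{a,b\}=ab+ba$. Then every polynomial identity of degree at most $4$ satisfied by $(\mathcal{LS}_{\mathfrak{B}_1}\langle X\rangle,\{\cdot,\cdot\})$ is a consequence of commutativity.
   Context: A left-symmetric algebra is an algebra with $(a,b,c)=(b,a,c)$, where $(a,b,c)=(ab)c-a(bc)$. *)

theory Defs
  imports Main "HOL-Library.Poly_Mapping"
begin

datatype 'x namon = NV 'x | NM "'x namon" "'x namon"

fun namon_deg :: "'x namon \<Rightarrow> nat" where
  "namon_deg (NV x) = 1"
| "namon_deg (NM a b) = namon_deg a + namon_deg b"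

text \<open>Elements of the free nonassociative (non-unital) algebra k{X}:
  finitely supported k-linear combinations of nonassociative monomials.\<close>
type_synonym ('k, 'x) napoly = "'x namon \<Rightarrow>\<^sub>0 'k"

definition na_smult :: "'k::field \<Rightarrow> ('k, 'x) napoly \<Rightarrow> ('k, 'x) napoly" where
  "na_smult c p = Poly_Mapping.map (\<lambda>v. c * v) p"

definition na_var :: "'x \<Rightarrow> ('k::field, 'x) napoly" where
  "na_var x = Poly_Mapping.single (NV x) 1"

definition na_mul :: "('k::field, 'x) napoly \<Rightarrow> ('k, 'x) napoly \<Rightarrow> ('k, 'x) napoly" where
  "na_mul p q = (\<Sum>a\<in>Poly_Mapping.keys p. \<Sum>b\<in>Poly_Mapping.keys q.
       Poly_Mapping.single (NM a b) (Poly_Mapping.lookup p a * Poly_Mapping.lookup q b))"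

definition na_anticomm :: "('k::field, 'x) napoly \<Rightarrow> ('k, 'x) napoly \<Rightarrow> ('k, 'x) napoly" where
  "na_anticomm p q = na_mul p q + na_mul q p"

fun namon_eval :: "('a \<Rightarrow> 'a \<Rightarrow> 'a) \<Rightarrow> ('v \<Rightarrow> 'a) \<Rightarrow> 'v namon \<Rightarrow> 'a" where
  "namon_eval mul \<sigma> (NV y) = \<sigma> y"
| "namon_eval mul \<sigma> (NM a b) = mul (namon_eval mul \<sigma> a) (namon_eval mul \<sigma> b)"

definition na_eval ::
  "(('k::field, 'x) napoly \<Rightarrow> ('k, 'x) napoly \<Rightarrow> ('k, 'x) napoly)
    \<Rightarrow> ('v \<Rightarrow> ('k, 'x) napoly) \<Rightarrow> ('k, 'v) napoly \<Rightarrow> ('k, 'x) napoly" where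
  "na_eval mul \<sigma> f = (\<Sum>m\<in>Poly_Mapping.keys f. na_smult (Poly_Mapping.lookup f m) (namon_eval mul \<sigma> m))"

inductive_set T_ideal :: "('k::field, 'v) napoly set \<Rightarrow> ('k, 'x) napoly set"
  for S :: "('k, 'v) napoly set" where
  subst: "s \<in> S \<Longrightarrow> na_eval na_mul \<sigma> s \<in> T_ideal S"
| zero: "0 \<in> T_ideal S"
| add: "a \<in> T_ideal S \<Longrightarrow> b \<in> T_ideal S \<Longrightarrow> a + b \<in> T_ideal S"
| smult: "a \<in> T_ideal S \<Longrightarrow> na_smult c a \<in> T_ideal S"
| mul_left: "a \<in> T_ideal S \<Longrightarrow> na_mul p a \<in> T_ideal S"
| mul_right: "a \<in> T_ideal S \<Longrightarrow> na_mul a p \<in> T_ideal S"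

abbreviation (input) nx :: "nat \<Rightarrow> ('k::field, nat) napoly" where
  "nx i \<equiv> na_var i"

definition na_assoc :: "('k::field, 'x) napoly \<Rightarrow> ('k, 'x) napoly \<Rightarrow> ('k, 'x) napoly \<Rightarrow> ('k, 'x) napoly" where
  "na_assoc a b c = na_mul (na_mul a b) c - na_mul a (na_mul b c)"

definition ls_identity :: "('k::field, nat) napoly" where
  "ls_identity = na_assoc (nx 0) (nx 1) (nx 2) - na_assoc (nx 1) (nx 0) (nx 2)"

definition B1_identity :: "('k::field, nat) napoly" where
  "B1_identity =
     na_mul (na_mul (nx 0) (nx 1)) (nx 2) - na_mul (na_mul (nx 1) (nx 0)) (nx 2)
   - na_mul (na_mul (nx 0) (nx 2)) (nx 1) + na_mul (na_mul (nx 2) (nx 0)) (nx 1)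
   + na_mul (na_mul (nx 1) (nx 2)) (nx 0) - na_mul (na_mul (nx 2) (nx 1)) (nx 0)"

text \<open>The free algebra LS_B1<X> is k{X} / T_ideal {ls_identity, B1_identity}.\<close>
definition LSB1_rel :: "('k::field, 'x) napoly set" where
  "LSB1_rel = T_ideal {ls_identity, B1_identity}"

text \<open>f is a polynomial identity of (LS_B1<X>, {,}): for every substitution of elements of
  the free algebra (represented by elements of k{X}), the value of f computed with the
  anticommutator vanishes in the quotient, i.e. lies in LSB1_rel (the quotient map is an
  algebra homomorphism, so the anticommutator in the quotient is induced by the one on k{X}).\<close>
definition is_identity_LSB1_anticomm :: "'x itself \<Rightarrow> ('k::field, 'v) napoly \<Rightarrow> bool" where
  "is_identity_LSB1_anticomm _ f \<longleftrightarrow>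
     (\<forall>\<sigma> :: 'v \<Rightarrow> ('k, 'x) napoly. na_eval na_anticomm \<sigma> f \<in> LSB1_rel)"

definition comm_identity :: "('k::field, nat) napoly" where
  "comm_identity = na_mul (nx 0) (nx 1) - na_mul (nx 1) (nx 0)"

definition consequence_of_comm :: "('k::field, 'v) napoly \<Rightarrow> bool" where
  "consequence_of_comm f \<longleftrightarrow> f \<in> T_ideal {comm_identity}"

definition na_deg_le :: "('k::zero, 'v) napoly \<Rightarrow> nat \<Rightarrow> bool" where
  "na_deg_le f d \<longleftrightarrow> (\<forall>m\<in>Poly_Mapping.keys f. namon_deg m \<le> d)"

end

theory Submission
  imports Defs
begin

text \<open>Call two monomials equivalent if they differ by commuting the factors of some products.
  A polynomial is a consequence of commutativity as soon as, for every equivalence class \<open>K\<close>,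
  its coefficients on the monomials of \<open>K\<close> sum to zero. Now let \<open>f\<close> be an identity of degree
  at most 4 of the anticommutator algebra and substitute distinct variables into it. For every
  class \<open>K\<close> there is a linear functional on \<open>k{X}\<close>, given on monomials of degree at most 4 by an
  explicit table on their bracketing shapes and vanishing in higher degrees, which kills the
  T-ideal of the left-symmetric identity and \<open>B\<^sub>1\<close> and maps the anticommutator expansion of each
  monomial \<open>m\<close> of degree at most 4 to 48 if \<open>m \<in> K\<close> and to 0 otherwise. Applied to the
  anticommutator value of \<open>f\<close>, which lies in the T-ideal, it returns 48 times the sum of the
  coefficients of \<open>f\<close> on \<open>K\<close>, which therefore vanishes in characteristic 0.
  Since both identities have degree 3, the T-ideal is spanned in degrees up to 4 by multilinear
  instances of them and their products with one further variable, so both properties of the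
  functional reduce to finitely many computations, which are checked by evaluation.\<close>

abbreviation (input) mon :: "'x namon \<Rightarrow> ('k::field, 'x) napoly" where
  "mon m \<equiv> Poly_Mapping.single m 1"

lemma lookup_na_smult [simp]: "Poly_Mapping.lookup (na_smult c p) m = c * Poly_Mapping.lookup p m"
  by (simp add: na_smult_def map.rep_eq when_def)

lemma keys_na_smult: "Poly_Mapping.keys (na_smult c p) \<subseteq> Poly_Mapping.keys p"
  by (auto simp: in_keys_iff)

lemma lookup_na_mul_NV [simp]: "Poly_Mapping.lookup (na_mul p q) (NV x) = 0"
  by (simp add: na_mul_def lookup_sum lookup_single)

lemma lookup_na_mul_NM [simp]:
  "Poly_Mapping.lookup (na_mul p q) (NM a b) = Poly_Mapping.lookup p a * Poly_Mapping.lookup q b"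
proof -
  have "(\<Sum>b'\<in>Poly_Mapping.keys q.
          Poly_Mapping.lookup p a' * Poly_Mapping.lookup q b' when NM a' b' = NM a b)
      = (Poly_Mapping.lookup p a * Poly_Mapping.lookup q b when a' = a)" for a'
    by (cases "a' = a") (auto simp: when_def in_keys_iff)
  then show ?thesis
    by (simp add: na_mul_def lookup_sum lookup_single when_def in_keys_iff)
qed

lemma keys_na_mul:
  "m \<in> Poly_Mapping.keys (na_mul p q) \<Longrightarrow>
    \<exists>a b. m = NM a b \<and> a \<in> Poly_Mapping.keys p \<and> b \<in> Poly_Mapping.keys q"
  by (cases m) (auto simp: in_keys_iff)

lemma na_mul_add_left: "na_mul (p + p') q = na_mul p q + na_mul p' q"
  and na_mul_add_right: "na_mul p (q + q') = na_mul p q + na_mul p q'"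
  and na_mul_diff_left: "na_mul (p - p') q = na_mul p q - na_mul p' q"
  and na_mul_diff_right: "na_mul p (q - q') = na_mul p q - na_mul p q'"
  and na_mul_smult_left: "na_mul (na_smult c p) q = na_smult c (na_mul p q)"
  and na_mul_smult_right: "na_mul p (na_smult c q) = na_smult c (na_mul p q)"
  by (rule poly_mapping_eqI, case_tac k; simp add: lookup_add lookup_minus algebra_simps)+

lemma na_mul_zero_left [simp]: "na_mul 0 q = 0"
  and na_mul_zero_right [simp]: "na_mul p 0 = 0"
  by (rule poly_mapping_eqI, case_tac k; simp)+

lemma na_mul_mon [simp]: "na_mul (mon a) (mon b) = mon (NM a b)"
  by (rule poly_mapping_eqI, case_tac k) (auto simp: lookup_single when_def)

lemma na_smult_add_right: "na_smult c (p + q) = na_smult c p + na_smult c q"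
  and na_smult_add_left: "na_smult (c + d) p = na_smult c p + na_smult d p"
  and na_smult_diff_right: "na_smult c (p - q) = na_smult c p - na_smult c q"
  and na_smult_diff_left: "na_smult (c - d) p = na_smult c p - na_smult d p"
  and na_smult_na_smult: "na_smult c (na_smult d p) = na_smult (c * d) p"
  and na_smult_one [simp]: "na_smult 1 p = p"
  and na_smult_zero_left [simp]: "na_smult 0 p = 0"
  and na_smult_zero_right [simp]: "na_smult c 0 = 0"
  and na_smult_minus_one: "na_smult (-1) p = - p"
  by (rule poly_mapping_eqI; simp add: lookup_add lookup_minus algebra_simps)+

lemma napoly_eq_sum_mon:
  "p = (\<Sum>m\<in>Poly_Mapping.keys p. na_smult (Poly_Mapping.lookup p m) (mon m))"
  by (rule poly_mapping_eqI) (simp add: lookup_sum lookup_single when_def in_keys_iff if_distrib[of "(*) _"]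
      cong: if_cong)

lemma na_eval_add: "na_eval mul \<sigma> (p + q) = na_eval mul \<sigma> p + na_eval mul \<sigma> q"
  and na_eval_diff: "na_eval mul \<sigma> (p - q) = na_eval mul \<sigma> p - na_eval mul \<sigma> q"
proof -
  let ?S = "Poly_Mapping.keys p \<union> Poly_Mapping.keys q"
  have expand: "na_eval mul \<sigma> r =
      (\<Sum>m\<in>?S. na_smult (Poly_Mapping.lookup r m) (namon_eval mul \<sigma> m))"
    if "Poly_Mapping.keys r \<subseteq> ?S" for r
    unfolding na_eval_def by (rule sum.mono_neutral_left) (use that in \<open>auto simp: in_keys_iff\<close>)
  have "Poly_Mapping.keys (p + q) \<subseteq> ?S" "Poly_Mapping.keys (p - q) \<subseteq> ?S"
    by (auto simp: in_keys_iff lookup_add lookup_minus)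
  then show "na_eval mul \<sigma> (p + q) = na_eval mul \<sigma> p + na_eval mul \<sigma> q"
    and "na_eval mul \<sigma> (p - q) = na_eval mul \<sigma> p - na_eval mul \<sigma> q"
    by (simp_all add: expand lookup_add lookup_minus na_smult_add_left na_smult_diff_left
        sum.distrib sum_subtractf)
qed

lemma na_eval_mon [simp]: "na_eval mul \<sigma> (mon m) = namon_eval mul \<sigma> m"
  by (simp add: na_eval_def)

lemma T_ideal_sum: "(\<And>a. a \<in> A \<Longrightarrow> f a \<in> T_ideal S) \<Longrightarrow> sum f A \<in> T_ideal S"
  by (induction A rule: infinite_finite_induct) (auto intro: T_ideal.zero T_ideal.add)

lemma linear_functional_eq_0:
  fixes G :: "('k::field, 'x) napoly \<Rightarrow> 'k"
  assumes "\<And>p q. G (p + q) = G p + G q"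
    and "\<And>c p. G (na_smult c p) = c * G p"
    and "\<And>m. G (mon m) = 0"
  shows "G p = 0"
proof -
  have "G 0 = 0" using assms(2)[of 0 0] by simp
  then have "G (sum f A) = (\<Sum>a\<in>A. G (f a))" for f and A :: "'x namon set"
    by (induction A rule: infinite_finite_induct) (simp_all add: assms(1))
  then show ?thesis
    by (subst napoly_eq_sum_mon) (simp add: assms(2,3))
qed

lemma trilinear_functional_eq_0:
  fixes F :: "('k::field, 'x) napoly \<Rightarrow> ('k, 'x) napoly \<Rightarrow> ('k, 'x) napoly \<Rightarrow> 'k"
  assumes "\<And>P P' Q R. F (P + P') Q R = F P Q R + F P' Q R"
    and "\<And>P Q Q' R. F P (Q + Q') R = F P Q R + F P Q' R"
    and "\<And>P Q R R'. F P Q (R + R') = F P Q R + F P Q R'"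
    and "\<And>c P Q R. F (na_smult c P) Q R = c * F P Q R"
    and "\<And>c P Q R. F P (na_smult c Q) R = c * F P Q R"
    and "\<And>c P Q R. F P Q (na_smult c R) = c * F P Q R"
    and "\<And>a b c. F (mon a) (mon b) (mon c) = 0"
  shows "F P Q R = 0"
proof -
  have mon2: "F (mon a) (mon b) R = 0" for a b R
    by (rule linear_functional_eq_0[where G = "F _ _"]) (simp_all add: assms(3,6,7))
  have mon1: "F (mon a) Q R = 0" for a Q R
    by (rule linear_functional_eq_0[where G = "\<lambda>Q. F _ Q R"]) (simp_all add: assms(2,5) mon2)
  show ?thesis
    by (rule linear_functional_eq_0[where G = "\<lambda>P. F P Q R"]) (simp_all add: assms(1,4) mon1)
qed

definition trilinear ::
  "(('k::field, 'x) napoly \<Rightarrow> ('k, 'x) napoly \<Rightarrow> ('k, 'x) napoly \<Rightarrow> ('k, 'x) napoly) \<Rightarrow> bool" where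
  "trilinear F \<longleftrightarrow>
     (\<forall>P P' Q R. F (P + P') Q R = F P Q R + F P' Q R) \<and>
     (\<forall>P Q Q' R. F P (Q + Q') R = F P Q R + F P Q' R) \<and>
     (\<forall>P Q R R'. F P Q (R + R') = F P Q R + F P Q R') \<and>
     (\<forall>c P Q R. F (na_smult c P) Q R = na_smult c (F P Q R)) \<and>
     (\<forall>c P Q R. F P (na_smult c Q) R = na_smult c (F P Q R)) \<and>
     (\<forall>c P Q R. F P Q (na_smult c R) = na_smult c (F P Q R))"

lemma namon_deg_pos: "0 < namon_deg m"
  by (induction m) auto

definition na_deg_ge :: "('k::zero, 'v) napoly \<Rightarrow> nat \<Rightarrow> bool" where
  "na_deg_ge f d \<longleftrightarrow> (\<forall>m\<in>Poly_Mapping.keys f. d \<le> namon_deg m)"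

lemma na_deg_ge_0 [simp]: "na_deg_ge 0 d"
  by (simp add: na_deg_ge_def)

lemma na_deg_ge_1: "na_deg_ge p 1"
  using namon_deg_pos by (auto simp: na_deg_ge_def Suc_le_eq)

lemma na_deg_ge_mono: "na_deg_ge p d \<Longrightarrow> d' \<le> d \<Longrightarrow> na_deg_ge p d'"
  by (auto simp: na_deg_ge_def)

lemma na_deg_ge_add: "na_deg_ge p d \<Longrightarrow> na_deg_ge q d \<Longrightarrow> na_deg_ge (p + q) d"
  and na_deg_ge_diff: "na_deg_ge p d \<Longrightarrow> na_deg_ge q d \<Longrightarrow> na_deg_ge (p - q) d"
  by (auto simp: na_deg_ge_def in_keys_iff lookup_add lookup_minus)

lemma na_deg_ge_smult: "na_deg_ge p d \<Longrightarrow> na_deg_ge (na_smult c p) d"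
  using keys_na_smult by (fastforce simp: na_deg_ge_def)

lemma na_deg_ge_mul: "na_deg_ge p i \<Longrightarrow> na_deg_ge q j \<Longrightarrow> na_deg_ge (na_mul p q) (i + j)"
  by (auto simp: na_deg_ge_def dest!: keys_na_mul intro!: add_mono)

lemma na_deg_ge_mul3:
  "na_deg_ge (na_mul (na_mul P Q) R) 3" "na_deg_ge (na_mul P (na_mul Q R)) 3"
  using na_deg_ge_mul[OF na_deg_ge_mul[OF na_deg_ge_1 na_deg_ge_1] na_deg_ge_1, of P Q R]
    na_deg_ge_mul[OF na_deg_ge_1 na_deg_ge_mul[OF na_deg_ge_1 na_deg_ge_1], of P Q R]
  by (simp_all add: numeral_3_eq_3)

section \<open>Consequences of commutativity\<close>

fun comm_equiv :: "'a namon \<Rightarrow> 'a namon \<Rightarrow> bool" where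
  "comm_equiv (NV x) (NV y) \<longleftrightarrow> x = y"
| "comm_equiv (NM a b) (NM c d) \<longleftrightarrow> comm_equiv a c \<and> comm_equiv b d \<or> comm_equiv a d \<and> comm_equiv b c"
| "comm_equiv _ _ \<longleftrightarrow> False"

lemma comm_equiv_refl [simp]: "comm_equiv m m"
  by (induction m) auto

lemma comm_equiv_sym: "comm_equiv m m' \<Longrightarrow> comm_equiv m' m"
  by (induction m m' rule: comm_equiv.induct) auto

lemma comm_equiv_trans: "comm_equiv m m' \<Longrightarrow> comm_equiv m' m'' \<Longrightarrow> comm_equiv m m''"
proof (induction m arbitrary: m' m'')
  case (NM a b)
  then obtain c d e f where m': "m' = NM c d" and m'': "m'' = NM e f"
    by (cases m'; cases m'') auto
  show ?case
    using NM.prems NM.IH(1)[of c e] NM.IH(1)[of c f] NM.IH(1)[of d e] NM.IH(1)[of d f]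
      NM.IH(2)[of c e] NM.IH(2)[of c f] NM.IH(2)[of d e] NM.IH(2)[of d f]
    unfolding m' m'' by auto
qed (auto elim: comm_equiv.elims)

lemma comm_equiv_map: "comm_equiv m m' \<Longrightarrow> comm_equiv (map_namon g m) (map_namon g m')"
  by (induction m m' rule: comm_equiv.induct) auto

lemma equivp_comm_equiv: "equivp comm_equiv"
  by (auto intro!: equivpI reflpI sympI transpI intro: comm_equiv_sym comm_equiv_trans)

lemma na_mul_commutator_in_T_ideal: "na_mul p q - na_mul q p \<in> T_ideal {comm_identity}"
proof -
  have "na_eval na_mul (\<lambda>i. if i = 0 then p else q) comm_identity \<in> T_ideal {comm_identity}"
    by (rule T_ideal.subst) simp
  then show ?thesis
    by (simp add: comm_identity_def na_var_def na_eval_diff)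
qed

lemma mon_diff_in_T_ideal_comm:
  "comm_equiv m m' \<Longrightarrow> (mon m - mon m' :: ('k::field, 'x) napoly) \<in> T_ideal {comm_identity}"
proof (induction m m' rule: comm_equiv.induct)
  case (2 a b c d)
  have straight: "(mon (NM a b) - mon (NM c d) :: ('k, 'x) napoly) =
      na_mul (mon a - mon c) (mon b) + na_mul (mon c) (mon b - mon d)"
    and crossed: "(mon (NM a b) - mon (NM c d) :: ('k, 'x) napoly) =
      na_mul (mon a - mon d) (mon b) + na_mul (mon d) (mon b - mon c)
        + (na_mul (mon d) (mon c) - na_mul (mon c) (mon d))"
    by (simp_all add: na_mul_diff_left na_mul_diff_right)
  from "2.prems" consider "comm_equiv a c" "comm_equiv b d" | "comm_equiv a d" "comm_equiv b c"
    by auto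
  then show ?case
  proof cases
    case 1
    with "2.IH" show ?thesis
      unfolding straight by (intro T_ideal.add T_ideal.mul_left T_ideal.mul_right) auto
  next
    case 2
    with "2.IH" show ?thesis
      unfolding crossed
      by (intro T_ideal.add T_ideal.mul_left T_ideal.mul_right na_mul_commutator_in_T_ideal) auto
  qed
qed (auto intro: T_ideal.zero)

definition comm_class_sum :: "('k::field, 'x) napoly \<Rightarrow> 'x namon \<Rightarrow> 'k" where
  "comm_class_sum f K =
     (\<Sum>m\<in>{m \<in> Poly_Mapping.keys f. comm_equiv m K}. Poly_Mapping.lookup f m)"

lemma sum_mon_comm_representatives_eq_0:
  fixes f :: "('k::field, 'x) napoly"
  assumes "\<And>K. comm_class_sum f K = 0"
    and r_equiv: "\<And>m. comm_equiv (r m) m"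
    and r_eq_iff: "\<And>m m'. r m = r m' \<longleftrightarrow> comm_equiv m m'"
  shows "(\<Sum>m\<in>Poly_Mapping.keys f. na_smult (Poly_Mapping.lookup f m) (mon (r m))) = 0"
proof (rule poly_mapping_eqI)
  fix R
  have "Poly_Mapping.lookup (\<Sum>m\<in>Poly_Mapping.keys f. na_smult (Poly_Mapping.lookup f m) (mon (r m))) R =
      (\<Sum>m\<in>{m \<in> Poly_Mapping.keys f. r m = R}. Poly_Mapping.lookup f m)"
    by (simp add: lookup_sum lookup_single when_def sum.inter_filter if_distrib[of "(*) _"] cong: if_cong)
  also have "\<dots> = 0"
  proof (cases "r R = R")
    case True
    then have "{m \<in> Poly_Mapping.keys f. r m = R} = {m \<in> Poly_Mapping.keys f. comm_equiv m R}"
      using r_eq_iff by metis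
    then show ?thesis using assms(1) by (simp add: comm_class_sum_def)
  next
    case False
    then have "{m \<in> Poly_Mapping.keys f. r m = R} = {}"
      using r_eq_iff r_equiv by (metis (mono_tags, lifting) empty_Collect_eq)
    then show ?thesis by (simp only: sum.empty)
  qed
  finally show "Poly_Mapping.lookup (\<Sum>m\<in>Poly_Mapping.keys f. na_smult (Poly_Mapping.lookup f m) (mon (r m))) R =
      Poly_Mapping.lookup 0 R" by simp
qed

lemma consequence_of_comm_if_comm_class_sums_eq_0:
  fixes f :: "('k::field, 'x) napoly"
  assumes "\<And>K. comm_class_sum f K = 0"
  shows "consequence_of_comm f"
proof -
  define r where "r m = (SOME m'. comm_equiv m' m)" for m :: "'x namon"
  have r_equiv: "comm_equiv (r m) m" for m
    unfolding r_def by (rule someI) (rule comm_equiv_refl)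
  have r_eq_iff: "r m = r m' \<longleftrightarrow> comm_equiv m m'" for m m'
  proof
    assume "comm_equiv m m'"
    then have "(\<lambda>n. comm_equiv n m) = (\<lambda>n. comm_equiv n m')"
      by (auto intro: comm_equiv_trans comm_equiv_sym)
    then show "r m = r m'" by (simp add: r_def)
  next
    assume "r m = r m'"
    then show "comm_equiv m m'"
      using r_equiv[of m] r_equiv[of m'] by (metis comm_equiv_sym comm_equiv_trans)
  qed
  have "f = f - (\<Sum>m\<in>Poly_Mapping.keys f. na_smult (Poly_Mapping.lookup f m) (mon (r m)))"
    using sum_mon_comm_representatives_eq_0[OF assms r_equiv r_eq_iff] by simp
  also have "\<dots> = (\<Sum>m\<in>Poly_Mapping.keys f. na_smult (Poly_Mapping.lookup f m) (mon m - mon (r m)))"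
    by (subst napoly_eq_sum_mon) (simp add: na_smult_diff_right sum_subtractf)
  also have "\<dots> \<in> T_ideal {comm_identity}"
    by (intro T_ideal_sum T_ideal.smult mon_diff_in_T_ideal_comm) (use r_equiv comm_equiv_sym in blast)
  finally show ?thesis
    by (simp add: consequence_of_comm_def)
qed

type_synonym 'a lincomb = "(int \<times> 'a namon) list"

definition lincomb_map :: "('a \<Rightarrow> 'b) \<Rightarrow> 'a lincomb \<Rightarrow> 'b lincomb" where
  "lincomb_map g L = map (\<lambda>(c, t). (c, map_namon g t)) L"

definition lincomb_scale :: "int \<Rightarrow> 'a lincomb \<Rightarrow> 'a lincomb" where
  "lincomb_scale e L = map (\<lambda>(c, t). (e * c, t)) L"

definition lincomb_prod :: "'a lincomb \<Rightarrow> 'a lincomb \<Rightarrow> 'a lincomb" where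
  "lincomb_prod L M = [(c * d, NM t u). (c, t) \<leftarrow> L, (d, u) \<leftarrow> M]"

lemma lincomb_map_simps [simp]:
  "lincomb_map g [] = []"
  "lincomb_map g ((c, t) # L) = (c, map_namon g t) # lincomb_map g L"
  by (simp_all add: lincomb_map_def)

lemma lincomb_map_comp [simp]: "lincomb_map g (lincomb_map h L) = lincomb_map (g \<circ> h) L"
  by (induction L) (auto simp: namon.map_comp comp_def)

lemma lincomb_map_scale [simp]: "lincomb_map g (lincomb_scale e L) = lincomb_scale e (lincomb_map g L)"
  by (induction L) (auto simp: lincomb_scale_def)

lemma lincomb_map_append [simp]: "lincomb_map g (L @ M) = lincomb_map g L @ lincomb_map g M"
  by (simp add: lincomb_map_def)

lemma lincomb_map_prod:
  "lincomb_map g (lincomb_prod L M) = lincomb_prod (lincomb_map g L) (lincomb_map g M)"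
  by (induction L) (auto simp: lincomb_prod_def lincomb_map_def)

definition lincomb_poly :: "'x lincomb \<Rightarrow> ('k::field, 'x) napoly" where
  "lincomb_poly L = (\<Sum>(c, t)\<leftarrow>L. na_smult (of_int c) (mon t))"

lemma lincomb_poly_simps [simp]:
  "lincomb_poly [] = 0"
  "lincomb_poly ((c, t) # L) = na_smult (of_int c) (mon t) + lincomb_poly L"
  by (simp_all add: lincomb_poly_def)

lemma lincomb_poly_append [simp]: "lincomb_poly (L @ M) = lincomb_poly L + lincomb_poly M"
  by (induction L) (auto simp: add.assoc)

lemma lincomb_poly_scale: "lincomb_poly (lincomb_scale e L) = na_smult (of_int e) (lincomb_poly L)"
  by (induction L) (auto simp: lincomb_scale_def na_smult_add_right na_smult_na_smult)

lemma na_mul_lincomb_poly: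
  "na_mul (lincomb_poly L) (lincomb_poly M) = (lincomb_poly (lincomb_prod L M) :: ('k::field, 'x) napoly)"
proof (induction L)
  case (Cons ct L)
  obtain c t where ct: "ct = (c, t)" by fastforce
  have "na_mul (mon t) (lincomb_poly M) =
      (lincomb_poly (map (\<lambda>(d, u). (d, NM t u)) M) :: ('k, 'x) napoly)"
    by (induction M) (auto simp: na_mul_add_right na_mul_smult_right)
  moreover have "map (\<lambda>(d, u). (c * d, NM t u)) M = lincomb_scale c (map (\<lambda>(d, u). (d, NM t u)) M)"
    by (induction M) (auto simp: lincomb_scale_def)
  ultimately show ?case
    using Cons.IH by (simp add: ct lincomb_prod_def na_mul_add_left na_mul_smult_left lincomb_poly_scale)
qed (simp add: lincomb_prod_def)

lemma na_mul_mon_lincomb_poly: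
  "na_mul (mon w) (lincomb_poly L) = lincomb_poly (lincomb_prod [(1, w)] L)"
  using na_mul_lincomb_poly[of "[(1, w)]" L] by simp

lemma na_mul_lincomb_poly_mon:
  "na_mul (lincomb_poly L) (mon w) = lincomb_poly (lincomb_prod L [(1, w)])"
  using na_mul_lincomb_poly[of L "[(1, w)]"] by simp

definition class_coeff :: "'a namon \<Rightarrow> 'a lincomb \<Rightarrow> int" where
  "class_coeff K L = (\<Sum>(c, t)\<leftarrow>L. if comm_equiv t K then c else 0)"

definition cancels_mod_comm :: "'a lincomb \<Rightarrow> bool" where
  "cancels_mod_comm L \<longleftrightarrow> (\<forall>(_, t)\<in>set L. class_coeff t L = 0)"

lemma class_coeff_Nil [simp]: "class_coeff K [] = 0"
  by (simp add: class_coeff_def)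

lemma class_coeff_append [simp]: "class_coeff K (L @ M) = class_coeff K L + class_coeff K M"
  and class_coeff_scale [simp]: "class_coeff K (lincomb_scale e L) = e * class_coeff K L"
  by (induction L) (auto simp: class_coeff_def lincomb_scale_def algebra_simps)

lemma class_coeff_lincomb_map:
  "class_coeff K (lincomb_map h L) = (\<Sum>(c, t)\<leftarrow>L. if comm_equiv (map_namon h t) K then c else 0)"
  by (induction L) (auto simp: class_coeff_def lincomb_map_def)

lemma sum_list_filter_partition:
  fixes f :: "'a \<Rightarrow> 'b::comm_monoid_add"
  assumes "\<And>x. Q x \<longleftrightarrow> \<not> P x"
  shows "(\<Sum>x\<leftarrow>xs. f x) = (\<Sum>x\<leftarrow>filter P xs. f x) + (\<Sum>x\<leftarrow>filter Q xs. f x)"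
  by (induction xs) (auto simp: add_ac assms)

lemma sum_list_select_filter_related:
  fixes xs :: "('c::comm_monoid_add \<times> 'a) list"
  assumes "\<And>u. R u t0 \<Longrightarrow> P u \<longleftrightarrow> P t0"
  shows "(\<Sum>(c, t)\<leftarrow>filter (\<lambda>(_, u). R u t0) xs. if P t then c else 0) =
    (if P t0 then \<Sum>(d, u)\<leftarrow>xs. if R u t0 then d else 0 else 0)"
proof (induction xs)
  case (Cons x xs)
  obtain d u where "x = (d, u)" by fastforce
  with Cons.IH assms[of u] show ?case by auto
qed simp

lemma sum_list_class_filter_unrelated:
  fixes xs :: "('c::comm_monoid_add \<times> 'a) list"
  assumes "\<And>u. R u t0 \<Longrightarrow> \<not> R u t"
  shows "(\<Sum>(d, u)\<leftarrow>filter (\<lambda>(_, u). \<not> R u t0) xs. if R u t then d else 0) =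
    (\<Sum>(d, u)\<leftarrow>xs. if R u t then d else 0)"
  using assms by (induction xs) auto

lemma sum_list_select_eq_0_if_class_sums_eq_0:
  fixes L :: "('c::comm_monoid_add \<times> 'a) list"
  assumes "equivp R"
    and invariant: "\<And>t u. R t u \<Longrightarrow> P t \<longleftrightarrow> P u"
    and "\<And>c t. (c, t) \<in> set L \<Longrightarrow> (\<Sum>(d, u)\<leftarrow>L. if R u t then d else 0) = 0"
  shows "(\<Sum>(c, t)\<leftarrow>L. if P t then c else 0) = 0"
  using assms(3)
proof (induction "length L" arbitrary: L rule: less_induct)
  case less
  show ?case
  proof (cases L)
    case (Cons ct rest)
    obtain c0 t0 where ct: "ct = (c0, t0)" by fastforce
    let ?same = "\<lambda>(_, u). R u t0" and ?other = "\<lambda>(_, u). \<not> R u t0"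
    have "(c0, t0) \<in> set L"
      by (simp add: Cons ct)
    then have "(\<Sum>(d, u)\<leftarrow>L. if R u t0 then d else 0) = 0"
      by (rule less.prems)
    then have "(\<Sum>(c, t)\<leftarrow>filter ?same L. if P t then c else 0) = 0"
      by (simp add: sum_list_select_filter_related[of R t0 P, OF invariant])
    moreover have "(\<Sum>(c, t)\<leftarrow>filter ?other L. if P t then c else 0) = 0"
    proof (rule less.hyps)
      show "length (filter ?other L) < length L"
        using length_filter_le[of _ rest] equivp_reflp[OF \<open>equivp R\<close>, of t0]
        by (simp add: Cons ct less_Suc_eq_le)
      fix c t
      assume "(c, t) \<in> set (filter ?other L)"
      then have "(c, t) \<in> set L" and "\<not> R t t0" by auto
      then have "\<not> R u t" if "R u t0" for u
        using \<open>equivp R\<close> that by (meson equivp_symp equivp_transp)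
      with less.prems[OF \<open>(c, t) \<in> set L\<close>]
      show "(\<Sum>(d, u)\<leftarrow>filter ?other L. if R u t then d else 0) = 0"
        by (simp add: sum_list_class_filter_unrelated)
    qed
    moreover have "(\<Sum>(c, t)\<leftarrow>L. if P t then c else 0) =
        (\<Sum>(c, t)\<leftarrow>filter ?same L. if P t then c else 0) +
        (\<Sum>(c, t)\<leftarrow>filter ?other L. if P t then c else 0)"
      by (rule sum_list_filter_partition) auto
    ultimately show ?thesis by simp
  qed simp
qed

lemma class_coeff_map_eq_0_if_cancels:
  assumes "cancels_mod_comm L"
  shows "class_coeff K (lincomb_map h L) = 0"
proof -
  have "(\<Sum>(c, t)\<leftarrow>L. if comm_equiv (map_namon h t) K then c else 0) = 0"
  proof (rule sum_list_select_eq_0_if_class_sums_eq_0[OF equivp_comm_equiv])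
    show "comm_equiv (map_namon h t) K \<longleftrightarrow> comm_equiv (map_namon h u) K" if "comm_equiv t u" for t u
      using comm_equiv_map[OF that] comm_equiv_map[OF comm_equiv_sym[OF that]]
      by (metis comm_equiv_trans)
  qed (use assms in \<open>auto simp: cancels_mod_comm_def class_coeff_def\<close>)
  then show ?thesis
    by (simp add: class_coeff_lincomb_map)
qed

fun leaves :: "'a namon \<Rightarrow> 'a list" where
  "leaves (NV x) = [x]"
| "leaves (NM a b) = leaves a @ leaves b"

fun shape_from :: "nat \<Rightarrow> 'a namon \<Rightarrow> nat namon" where
  "shape_from k (NV x) = NV k"
| "shape_from k (NM a b) = NM (shape_from k a) (shape_from (k + namon_deg a) b)"

fun shapes_from :: "nat \<Rightarrow> 'a namon list \<Rightarrow> nat namon list" where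
  "shapes_from k [] = []"
| "shapes_from k (m # ms) = shape_from k m # shapes_from (k + namon_deg m) ms"

lemma length_leaves [simp]: "length (leaves m) = namon_deg m"
  by (induction m) auto

lemma set_leaves: "set (leaves m) = set_namon m"
  by (induction m) auto

lemma leaves_map [simp]: "leaves (map_namon g m) = map g (leaves m)"
  by (induction m) auto

lemma namon_deg_map [simp]: "namon_deg (map_namon g m) = namon_deg m"
  by (induction m) auto

lemma shape_from_map [simp]: "shape_from k (map_namon g m) = shape_from k m"
  by (induction m arbitrary: k) auto

lemma namon_deg_shape_from [simp]: "namon_deg (shape_from k m) = namon_deg m"
  by (induction m arbitrary: k) auto

lemma relabel_shape_from:
  "map_namon ((!) (xs @ leaves m @ ys)) (shape_from (length xs) m) = m"
proof (induction m arbitrary: xs ys)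
  case (NM a b)
  from NM.IH(1)[of xs "leaves b @ ys"] NM.IH(2)[of "xs @ leaves a" ys] show ?case by simp
qed simp

lemma relabel_shapes_from:
  "map (map_namon ((!) (xs @ concat (map leaves ms)))) (shapes_from (length xs) ms) = ms"
proof (induction ms arbitrary: xs)
  case (Cons m ms)
  from relabel_shape_from[of xs m "concat (map leaves ms)"] Cons.IH[of "xs @ leaves m"]
  show ?case by simp
qed simp

fun bracketings :: "nat \<Rightarrow> nat \<Rightarrow> nat namon list" where
  "bracketings k n = (if n \<le> 1 then [NV k] else
     concat (map (\<lambda>i. [NM a b. a \<leftarrow> bracketings k i, b \<leftarrow> bracketings (k + i) (n - i)]) [1..<n]))"

declare bracketings.simps [simp del]

fun bracketing_lists :: "nat \<Rightarrow> nat list \<Rightarrow> nat namon list list" where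
  "bracketing_lists k [] = [[]]"
| "bracketing_lists k (d # ds) = [s # ss. s \<leftarrow> bracketings k d, ss \<leftarrow> bracketing_lists (k + d) ds]"

lemma shape_from_in_bracketings: "shape_from k m \<in> set (bracketings k (namon_deg m))"
proof (induction m arbitrary: k)
  case (NV x)
  then show ?case by (simp add: bracketings.simps)
next
  case (NM a b)
  have "namon_deg a \<in> set [1..<namon_deg a + namon_deg b]"
    using namon_deg_pos[of a] namon_deg_pos[of b] by simp
  with NM.IH[of k] NM.IH[of "k + namon_deg a"] show ?case
    using namon_deg_pos[of a] namon_deg_pos[of b] by (subst bracketings.simps) force
qed

lemma shapes_from_in_bracketing_lists:
  "shapes_from k ms \<in> set (bracketing_lists k (map namon_deg ms))"
  by (induction ms arbitrary: k) (auto intro!: bexI[OF _ shape_from_in_bracketings])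

definition small_shape_lists :: "nat \<Rightarrow> nat namon list list" where
  "small_shape_lists n =
     concat (map (bracketing_lists 0) (filter (\<lambda>ds. sum_list ds \<le> 4) (List.n_lists n [1..<5])))"

lemma small_shape_lists_relabel:
  assumes "sum_list (map namon_deg ms) \<le> 4"
  shows "\<exists>g. \<exists>ss\<in>set (small_shape_lists (length ms)). ms = map (map_namon g) ss"
proof (intro exI bexI)
  show "ms = map (map_namon ((!) (concat (map leaves ms)))) (shapes_from 0 ms)"
    using relabel_shapes_from[of "[]" ms] by simp
  have "namon_deg m \<in> {1..<5}" if "m \<in> set ms" for m
    using assms member_le_sum_list[of "namon_deg m" "map namon_deg ms"] namon_deg_pos[of m] that
    by simp
  then have "map namon_deg ms \<in> set (List.n_lists (length ms) [1..<5])"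
    by (auto simp: set_n_lists)
  then show "shapes_from 0 ms \<in> set (small_shape_lists (length ms))"
    using assms shapes_from_in_bracketing_lists[of 0 ms] by (auto simp: small_shape_lists_def)
qed

section \<open>The projection functional\<close>

text \<open>These coefficients solve the finite linear system expressing that \<open>proj_coeff\<close> vanishes on
  the instances of the identities in degrees 3 and 4 and takes the value 48 on the anticommutator
  expansions; both facts are checked by evaluation below.\<close>
definition proj_table :: "(nat namon \<times> nat lincomb) list" where
  "proj_table =
    [(NV 0, [(48, NV 0)]),
     (NM (NV 0) (NV 1), [(24, NM (NV 0) (NV 1))]),
     (NM (NM (NV 0) (NV 1)) (NV 2), [(24, NM (NM (NV 0) (NV 1)) (NV 2))]),
     (NM (NM (NM (NV 0) (NV 1)) (NV 2)) (NV 3),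
       [(12, NM (NM (NM (NV 0) (NV 1)) (NV 2)) (NV 3)), (-4, NM (NM (NM (NV 0) (NV 2)) (NV 1)) (NV 3)),
        (4, NM (NM (NM (NV 1) (NV 2)) (NV 0)) (NV 3)), (3, NM (NM (NV 0) (NV 1)) (NM (NV 2) (NV 3))),
        (1, NM (NM (NV 0) (NV 2)) (NM (NV 1) (NV 3))), (-1, NM (NM (NV 0) (NV 3)) (NM (NV 1) (NV 2)))]),
     (NM (NM (NV 0) (NM (NV 1) (NV 2))) (NV 3),
       [(-4, NM (NM (NM (NV 0) (NV 1)) (NV 2)) (NV 3)), (4, NM (NM (NM (NV 0) (NV 2)) (NV 1)) (NV 3)),
        (12, NM (NM (NM (NV 1) (NV 2)) (NV 0)) (NV 3)), (1, NM (NM (NV 0) (NV 1)) (NM (NV 2) (NV 3))),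
        (-1, NM (NM (NV 0) (NV 2)) (NM (NV 1) (NV 3))), (-3, NM (NM (NV 0) (NV 3)) (NM (NV 1) (NV 2)))]),
     (NM (NM (NV 0) (NV 1)) (NM (NV 2) (NV 3)), [(6, NM (NM (NV 0) (NV 1)) (NM (NV 2) (NV 3)))])]"

definition proj_shape :: "nat namon \<Rightarrow> nat lincomb" where
  "proj_shape s = (case map_of proj_table s of Some L \<Rightarrow> L | None \<Rightarrow> [])"

lemma proj_table_wf:
  "\<forall>(s, L)\<in>set proj_table. namon_deg s \<le> 4 \<and> (\<forall>(_, t)\<in>set L. set_namon t \<subseteq> {..<namon_deg s})"
  by (simp add: proj_table_def)

lemma proj_shape_vars: "(c, t) \<in> set (proj_shape s) \<Longrightarrow> set_namon t \<subseteq> {..<namon_deg s}"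
  using proj_table_wf by (fastforce simp: proj_shape_def split: option.splits dest: map_of_SomeD)

lemma proj_shape_deg: "4 < namon_deg s \<Longrightarrow> proj_shape s = []"
  using proj_table_wf by (fastforce simp: proj_shape_def split: option.splits dest: map_of_SomeD)

definition proj_terms :: "'a namon \<Rightarrow> 'a lincomb" where
  "proj_terms m = lincomb_map ((!) (leaves m)) (proj_shape (shape_from 0 m))"

lemma proj_terms_map: "proj_terms (map_namon h m) = lincomb_map h (proj_terms m)"
proof -
  have "map_namon ((!) (map h (leaves m))) t = map_namon h (map_namon ((!) (leaves m)) t)"
    if "(c, t) \<in> set (proj_shape (shape_from 0 m))" for c t
    using proj_shape_vars[OF that] by (auto simp: namon.map_comp intro!: namon.map_cong0)
  then show ?thesis
    by (auto simp: proj_terms_def lincomb_map_def)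
qed

lemma proj_terms_deg: "4 < namon_deg m \<Longrightarrow> proj_terms m = []"
  by (simp add: proj_terms_def proj_shape_deg lincomb_map_def)

fun proj_lincomb :: "'a lincomb \<Rightarrow> 'a lincomb" where
  "proj_lincomb [] = []"
| "proj_lincomb ((e, t) # L) = lincomb_scale e (proj_terms t) @ proj_lincomb L"

lemma proj_lincomb_map: "proj_lincomb (lincomb_map h L) = lincomb_map h (proj_lincomb L)"
  by (induction L rule: proj_lincomb.induct) (simp_all add: proj_terms_map)

definition proj_coeff :: "('x \<Rightarrow> 'v) \<Rightarrow> 'v namon \<Rightarrow> ('k::field, 'x) napoly \<Rightarrow> 'k" where
  "proj_coeff \<rho> K p = (\<Sum>m\<in>Poly_Mapping.keys p.
     Poly_Mapping.lookup p m * of_int (class_coeff K (proj_terms (map_namon \<rho> m))))"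

lemma proj_coeff_add:
  fixes p q :: "('k::field, 'x) napoly"
  shows "proj_coeff \<rho> K (p + q) = proj_coeff \<rho> K p + proj_coeff \<rho> K q"
proof -
  let ?S = "Poly_Mapping.keys p \<union> Poly_Mapping.keys q"
  have expand: "proj_coeff \<rho> K r = (\<Sum>m\<in>?S.
      Poly_Mapping.lookup r m * of_int (class_coeff K (proj_terms (map_namon \<rho> m))))"
    if "Poly_Mapping.keys r \<subseteq> ?S" for r :: "('k, 'x) napoly"
    unfolding proj_coeff_def by (rule sum.mono_neutral_left) (use that in \<open>auto simp: in_keys_iff\<close>)
  have "Poly_Mapping.keys (p + q) \<subseteq> ?S"
    by (auto simp: in_keys_iff lookup_add)
  then show ?thesis
    by (simp add: expand lookup_add distrib_right sum.distrib)
qed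

lemma proj_coeff_smult: "proj_coeff \<rho> K (na_smult c p) = c * proj_coeff \<rho> K p"
proof -
  have "proj_coeff \<rho> K (na_smult c p) = (\<Sum>m\<in>Poly_Mapping.keys p.
      Poly_Mapping.lookup (na_smult c p) m * of_int (class_coeff K (proj_terms (map_namon \<rho> m))))"
    unfolding proj_coeff_def
    by (rule sum.mono_neutral_left) (auto simp: in_keys_iff)
  then show ?thesis
    by (simp add: proj_coeff_def sum_distrib_left mult.assoc)
qed

lemma proj_coeff_zero [simp]: "proj_coeff \<rho> K 0 = 0"
  by (simp add: proj_coeff_def)

lemma proj_coeff_mon [simp]:
  "proj_coeff \<rho> K (mon m) = of_int (class_coeff K (proj_terms (map_namon \<rho> m)))"
  by (simp add: proj_coeff_def)

lemma proj_coeff_sum: "proj_coeff \<rho> K (sum f A) = (\<Sum>a\<in>A. proj_coeff \<rho> K (f a))"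
  by (induction A rule: infinite_finite_induct) (simp_all add: proj_coeff_add)

lemma proj_coeff_lincomb_poly:
  "proj_coeff \<rho> K (lincomb_poly L) = of_int (class_coeff K (lincomb_map \<rho> (proj_lincomb L)))"
  by (induction L rule: proj_lincomb.induct)
    (simp_all add: proj_coeff_add proj_coeff_smult proj_terms_map)

lemma proj_coeff_certified:
  "cancels_mod_comm (proj_lincomb L) \<Longrightarrow> proj_coeff \<rho> K (lincomb_poly (lincomb_map g L)) = 0"
  by (simp add: proj_coeff_lincomb_poly proj_lincomb_map class_coeff_map_eq_0_if_cancels)

lemma proj_coeff_deg_ge_5: "na_deg_ge p 5 \<Longrightarrow> proj_coeff \<rho> K p = 0"
  by (auto simp: proj_coeff_def na_deg_ge_def proj_terms_deg class_coeff_def intro!: sum.neutral)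

lemma proj_coeff_mul_deg_ge_4:
  assumes "na_deg_ge b 4"
  shows "proj_coeff \<rho> K (na_mul q b) = 0" and "proj_coeff \<rho> K (na_mul b q) = 0"
  using na_deg_ge_mul[OF na_deg_ge_1[of q] assms] na_deg_ge_mul[OF assms na_deg_ge_1[of q]]
  by (simp_all add: proj_coeff_deg_ge_5)

lemma proj_coeff_lincomb_poly_deg_gt_4:
  "(\<And>c t. (c, t) \<in> set L \<Longrightarrow> 4 < namon_deg t) \<Longrightarrow> proj_coeff \<rho> K (lincomb_poly L) = 0"
proof -
  assume "\<And>c t. (c, t) \<in> set L \<Longrightarrow> 4 < namon_deg t"
  then have "proj_lincomb L = []"
    by (induction L rule: proj_lincomb.induct) (auto simp: lincomb_scale_def intro!: proj_terms_deg)
  then show ?thesis by (simp add: proj_coeff_lincomb_poly)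
qed

section \<open>Vanishing on the T-ideal of the defining identities\<close>

definition lincomb_inst :: "'a namon list \<Rightarrow> nat lincomb \<Rightarrow> 'a lincomb" where
  "lincomb_inst args L = map (\<lambda>(c, t). (c, namon_eval NM ((!) args) t)) L"

lemma namon_deg_namon_eval_NM: "namon_deg (namon_eval NM \<sigma> t) = (\<Sum>i\<leftarrow>leaves t. namon_deg (\<sigma> i))"
  by (induction t) auto

lemma map_namon_namon_eval_NM:
  "map_namon g (namon_eval NM \<sigma> t) = namon_eval NM (map_namon g \<circ> \<sigma>) t"
  by (induction t) auto

lemma namon_eval_cong:
  "(\<And>i. i \<in> set_namon t \<Longrightarrow> \<sigma> i = \<tau> i) \<Longrightarrow> namon_eval mul \<sigma> t = namon_eval mul \<tau> t"
  by (induction t) auto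

locale identity_certificate =
  fixes template :: "nat lincomb"
    and F :: "('k::field, 'x) napoly \<Rightarrow> ('k, 'x) napoly \<Rightarrow> ('k, 'x) napoly \<Rightarrow> ('k, 'x) napoly"
  assumes trilinear: "trilinear F"
    and F_mon: "\<And>a b c. F (mon a) (mon b) (mon c) = lincomb_poly (lincomb_inst [a, b, c] template)"
    and template_leaves: "\<forall>(_, t)\<in>set template. distinct (leaves t) \<and> set (leaves t) = {0, 1, 2}"
    and cancels_inst:
      "\<forall>ss\<in>set (small_shape_lists 3). cancels_mod_comm (proj_lincomb (lincomb_inst ss template))"
    and cancels_mul_left: "\<forall>ss\<in>set (small_shape_lists 4).
      cancels_mod_comm (proj_lincomb (lincomb_prod [(1, hd ss)] (lincomb_inst (tl ss) template)))"
    and cancels_mul_right: "\<forall>ss\<in>set (small_shape_lists 4).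
      cancels_mod_comm (proj_lincomb (lincomb_prod (lincomb_inst (tl ss) template) [(1, hd ss)]))"
begin

lemma namon_deg_inst:
  assumes "(e, t) \<in> set (lincomb_inst [a, b, c] template)"
  shows "namon_deg t = namon_deg a + namon_deg b + namon_deg c"
proof -
  obtain t0 where t0: "(e, t0) \<in> set template" and t: "t = namon_eval NM ((!) [a, b, c]) t0"
    using assms by (auto simp: lincomb_inst_def)
  have "distinct (leaves t0)" "set (leaves t0) = {0, 1, 2}"
    using template_leaves t0 by auto
  then have "(\<Sum>i\<leftarrow>leaves t0. namon_deg ([a, b, c] ! i)) = (\<Sum>i\<in>{0, 1, 2}. namon_deg ([a, b, c] ! i))"
    by (simp add: sum_list_distinct_conv_sum_set)
  then show ?thesis
    by (simp add: t namon_deg_namon_eval_NM)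
qed

lemma lincomb_inst_relabel:
  assumes "length ss = 3"
  shows "lincomb_inst (map (map_namon g) ss) template = lincomb_map g (lincomb_inst ss template)"
proof -
  have "namon_eval NM ((!) (map (map_namon g) ss)) t = map_namon g (namon_eval NM ((!) ss) t)"
    if "(c, t) \<in> set template" for c t
  proof -
    have "i < length ss" if "i \<in> set_namon t" for i
      using template_leaves \<open>(c, t) \<in> set template\<close> that assms by (fastforce simp: set_leaves[symmetric])
    then show ?thesis
      by (auto simp: map_namon_namon_eval_NM intro!: namon_eval_cong)
  qed
  then show ?thesis
    by (auto simp: lincomb_inst_def lincomb_map_def)
qed

lemma proj_coeff_inst: "proj_coeff \<rho> K (lincomb_poly (lincomb_inst [a, b, c] template)) = 0"
proof (cases "sum_list (map namon_deg [a, b, c]) \<le> 4")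
  case True
  then have "\<exists>g. \<exists>ss\<in>set (small_shape_lists 3). [a, b, c] = map (map_namon g) ss"
    using small_shape_lists_relabel[of "[a, b, c]"] by (simp add: numeral_3_eq_3)
  then obtain g ss where ss: "ss \<in> set (small_shape_lists 3)" and abc: "[a, b, c] = map (map_namon g) ss"
    by (elim exE bexE)
  have "length ss = 3"
    using arg_cong[OF abc, of length] by simp
  then have "lincomb_inst [a, b, c] template = lincomb_map g (lincomb_inst ss template)"
    unfolding abc by (rule lincomb_inst_relabel)
  then show ?thesis
    using cancels_inst ss by (simp add: proj_coeff_certified)
next
  case False
  then show ?thesis
    by (intro proj_coeff_lincomb_poly_deg_gt_4) (auto dest: namon_deg_inst)
qed

lemma small_product_relabel:
  assumes "namon_deg w + namon_deg a + namon_deg b + namon_deg c \<le> 4"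
  obtains g ss where "ss \<in> set (small_shape_lists 4)" "w = map_namon g (hd ss)"
    "lincomb_inst [a, b, c] template = lincomb_map g (lincomb_inst (tl ss) template)"
proof -
  have "\<exists>g. \<exists>ss\<in>set (small_shape_lists 4). [w, a, b, c] = map (map_namon g) ss"
    using small_shape_lists_relabel[of "[w, a, b, c]"] assms by (simp add: eval_nat_numeral add.assoc)
  then obtain g ss where ss: "ss \<in> set (small_shape_lists 4)" and wabc: "[w, a, b, c] = map (map_namon g) ss"
    by (elim exE bexE)
  then obtain w0 abc0 where ss_eq: "ss = w0 # abc0"
    by (cases ss) auto
  with wabc have "w = map_namon g w0" "[a, b, c] = map (map_namon g) abc0" "length abc0 = 3"
    by auto
  then show ?thesis
    by (intro that[OF ss]) (simp_all add: ss_eq lincomb_inst_relabel)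
qed

lemma proj_coeff_mul_left_inst:
  "proj_coeff \<rho> K (lincomb_poly (lincomb_prod [(1, w)] (lincomb_inst [a, b, c] template))) = 0"
proof (cases "namon_deg w + namon_deg a + namon_deg b + namon_deg c \<le> 4")
  case True
  then obtain g ss where "ss \<in> set (small_shape_lists 4)" "w = map_namon g (hd ss)"
    "lincomb_inst [a, b, c] template = lincomb_map g (lincomb_inst (tl ss) template)"
    by (rule small_product_relabel)
  then have "lincomb_prod [(1, w)] (lincomb_inst [a, b, c] template) = lincomb_map g (lincomb_prod [(1, hd ss)] (lincomb_inst (tl ss) template))"
    by (simp add: lincomb_map_prod)
  then show ?thesis
    using cancels_mul_left \<open>ss \<in> set (small_shape_lists 4)\<close> by (simp add: proj_coeff_certified)
next
  case False
  then show ?thesis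
    by (intro proj_coeff_lincomb_poly_deg_gt_4) (auto simp: lincomb_prod_def dest: namon_deg_inst)
qed

lemma proj_coeff_mul_right_inst:
  "proj_coeff \<rho> K (lincomb_poly (lincomb_prod (lincomb_inst [a, b, c] template) [(1, w)])) = 0"
proof (cases "namon_deg w + namon_deg a + namon_deg b + namon_deg c \<le> 4")
  case True
  then obtain g ss where "ss \<in> set (small_shape_lists 4)" "w = map_namon g (hd ss)"
    "lincomb_inst [a, b, c] template = lincomb_map g (lincomb_inst (tl ss) template)"
    by (rule small_product_relabel)
  then have "lincomb_prod (lincomb_inst [a, b, c] template) [(1, w)] = lincomb_map g (lincomb_prod (lincomb_inst (tl ss) template) [(1, hd ss)])"
    by (simp add: lincomb_map_prod)
  then show ?thesis
    using cancels_mul_right \<open>ss \<in> set (small_shape_lists 4)\<close> by (simp add: proj_coeff_certified)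
next
  case False
  then show ?thesis
    by (intro proj_coeff_lincomb_poly_deg_gt_4) (auto simp: lincomb_prod_def dest: namon_deg_inst)
qed

lemma F_linear:
  "F (P + P') Q R = F P Q R + F P' Q R"
  "F P (Q + Q') R = F P Q R + F P Q' R"
  "F P Q (R + R') = F P Q R + F P Q R'"
  "F (na_smult c P) Q R = na_smult c (F P Q R)"
  "F P (na_smult c Q) R = na_smult c (F P Q R)"
  "F P Q (na_smult c R) = na_smult c (F P Q R)"
  using trilinear by (simp_all add: trilinear_def)

lemma proj_coeff_F: "proj_coeff \<rho> K (F P Q R) = 0"
  by (rule trilinear_functional_eq_0[where F = "\<lambda>P Q R. proj_coeff \<rho> K (F P Q R)"])
    (simp_all add: F_linear proj_coeff_add proj_coeff_smult F_mon proj_coeff_inst)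

lemma proj_coeff_mul_F: "proj_coeff \<rho> K (na_mul p (F P Q R)) = 0"
proof (rule linear_functional_eq_0[where G = "\<lambda>p. proj_coeff \<rho> K (na_mul p (F P Q R))"])
  fix w :: "'x namon"
  show "proj_coeff \<rho> K (na_mul (mon w) (F P Q R)) = 0"
    by (rule trilinear_functional_eq_0[where F = "\<lambda>P Q R. proj_coeff \<rho> K (na_mul (mon w) (F P Q R))"])
      (simp_all add: F_linear na_mul_add_right na_mul_smult_right proj_coeff_add proj_coeff_smult
        F_mon na_mul_mon_lincomb_poly proj_coeff_mul_left_inst)
qed (simp_all add: na_mul_add_left na_mul_smult_left proj_coeff_add proj_coeff_smult)

lemma proj_coeff_F_mul: "proj_coeff \<rho> K (na_mul (F P Q R) p) = 0"
proof (rule linear_functional_eq_0[where G = "\<lambda>p. proj_coeff \<rho> K (na_mul (F P Q R) p)"])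
  fix w :: "'x namon"
  show "proj_coeff \<rho> K (na_mul (F P Q R) (mon w)) = 0"
    by (rule trilinear_functional_eq_0[where F = "\<lambda>P Q R. proj_coeff \<rho> K (na_mul (F P Q R) (mon w))"])
      (simp_all add: F_linear na_mul_add_left na_mul_smult_left proj_coeff_add proj_coeff_smult
        F_mon na_mul_lincomb_poly_mon proj_coeff_mul_right_inst)
qed (simp_all add: na_mul_add_right na_mul_smult_right proj_coeff_add proj_coeff_smult)

end

definition ls_template :: "nat lincomb" where
  "ls_template =
    [(1, NM (NM (NV 0) (NV 1)) (NV 2)), (-1, NM (NV 0) (NM (NV 1) (NV 2))),
     (-1, NM (NM (NV 1) (NV 0)) (NV 2)), (1, NM (NV 1) (NM (NV 0) (NV 2)))]"

definition B1_template :: "nat lincomb" where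
  "B1_template =
    [(1, NM (NM (NV 0) (NV 1)) (NV 2)), (-1, NM (NM (NV 1) (NV 0)) (NV 2)),
     (-1, NM (NM (NV 0) (NV 2)) (NV 1)), (1, NM (NM (NV 2) (NV 0)) (NV 1)),
     (1, NM (NM (NV 1) (NV 2)) (NV 0)), (-1, NM (NM (NV 2) (NV 1)) (NV 0))]"

definition ls_value :: "('k::field, 'x) napoly \<Rightarrow> ('k, 'x) napoly \<Rightarrow> ('k, 'x) napoly \<Rightarrow> ('k, 'x) napoly" where
  "ls_value P Q R = na_assoc P Q R - na_assoc Q P R"

definition B1_value :: "('k::field, 'x) napoly \<Rightarrow> ('k, 'x) napoly \<Rightarrow> ('k, 'x) napoly \<Rightarrow> ('k, 'x) napoly" where
  "B1_value P Q R =
     na_mul (na_mul P Q) R - na_mul (na_mul Q P) R - na_mul (na_mul P R) Q + na_mul (na_mul R P) Q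
   + na_mul (na_mul Q R) P - na_mul (na_mul R Q) P"

lemma na_eval_ls_identity: "na_eval na_mul \<sigma> ls_identity = ls_value (\<sigma> 0) (\<sigma> 1) (\<sigma> 2)"
  by (simp add: ls_identity_def ls_value_def na_assoc_def na_var_def na_eval_diff)

lemma na_eval_B1_identity: "na_eval na_mul \<sigma> B1_identity = B1_value (\<sigma> 0) (\<sigma> 1) (\<sigma> 2)"
  by (simp add: B1_identity_def B1_value_def na_var_def na_eval_add na_eval_diff)

lemma na_deg_ge_ls_value: "na_deg_ge (ls_value P Q R) 3"
  by (simp add: ls_value_def na_assoc_def na_deg_ge_diff na_deg_ge_mul3)

lemma na_deg_ge_B1_value: "na_deg_ge (B1_value P Q R) 3"
  by (simp add: B1_value_def na_deg_ge_add na_deg_ge_diff na_deg_ge_mul3)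

interpretation ls: identity_certificate ls_template ls_value
proof
  show "trilinear ls_value"
    by (simp add: trilinear_def ls_value_def na_assoc_def na_mul_add_left na_mul_add_right
        na_mul_smult_left na_mul_smult_right na_smult_diff_right)
  show "\<And>a b c. ls_value (mon a) (mon b) (mon c) = lincomb_poly (lincomb_inst [a, b, c] ls_template)"
    by (simp add: ls_value_def na_assoc_def ls_template_def lincomb_inst_def na_smult_minus_one)
  show "\<forall>(_, t)\<in>set ls_template. distinct (leaves t) \<and> set (leaves t) = {0, 1, 2}"
    by (auto simp: ls_template_def)
qed code_simp+

interpretation B1: identity_certificate B1_template B1_value
proof
  show "trilinear B1_value"
    by (simp add: trilinear_def B1_value_def na_mul_add_left na_mul_add_right
        na_mul_smult_left na_mul_smult_right na_smult_diff_right na_smult_add_right)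
  show "\<And>a b c. B1_value (mon a) (mon b) (mon c) = lincomb_poly (lincomb_inst [a, b, c] B1_template)"
    by (simp add: B1_value_def B1_template_def lincomb_inst_def na_smult_minus_one)
  show "\<forall>(_, t)\<in>set B1_template. distinct (leaves t) \<and> set (leaves t) = {0, 1, 2}"
    by (auto simp: B1_template_def)
qed code_simp+

text \<open>The degree bound makes the induction go through: multiplying an element of degree at least 3
  by two further factors reaches degree 5, where \<open>proj_coeff\<close> vanishes.\<close>
lemma LSB1_rel_deg_ge_3_and_proj_coeff:
  fixes a :: "('k::field, 'x) napoly"
  assumes "a \<in> LSB1_rel"
  shows "na_deg_ge a 3 \<and>
    (\<forall>p. proj_coeff \<rho> K a = 0 \<and> proj_coeff \<rho> K (na_mul p a) = 0 \<and> proj_coeff \<rho> K (na_mul a p) = 0)"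
  using assms unfolding LSB1_rel_def
proof (induction rule: T_ideal.induct)
  case (subst s \<sigma>)
  then show ?case
    by (auto simp: na_eval_ls_identity na_eval_B1_identity na_deg_ge_ls_value na_deg_ge_B1_value
        ls.proj_coeff_F ls.proj_coeff_mul_F ls.proj_coeff_F_mul
        B1.proj_coeff_F B1.proj_coeff_mul_F B1.proj_coeff_F_mul)
next
  case zero
  then show ?case by simp
next
  case (add a b)
  then show ?case
    by (simp add: na_deg_ge_add proj_coeff_add na_mul_add_left na_mul_add_right)
next
  case (smult a c)
  then show ?case
    by (simp add: na_deg_ge_smult proj_coeff_smult na_mul_smult_left na_mul_smult_right)
next
  case (mul_left a p)
  then have "na_deg_ge (na_mul p a) 4"
    using na_deg_ge_mul[OF na_deg_ge_1[of p], of a 3] by simp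
  with mul_left.IH show ?case
    by (auto simp: proj_coeff_mul_deg_ge_4 elim: na_deg_ge_mono)
next
  case (mul_right a p)
  then have "na_deg_ge (na_mul a p) 4"
    using na_deg_ge_mul[OF _ na_deg_ge_1[of p], of a 3] by simp
  with mul_right.IH show ?case
    by (auto simp: proj_coeff_mul_deg_ge_4 elim: na_deg_ge_mono)
qed

corollary proj_coeff_LSB1_rel: "a \<in> LSB1_rel \<Longrightarrow> proj_coeff \<rho> K a = 0"
  using LSB1_rel_deg_ge_3_and_proj_coeff by blast

fun anticomm_lincomb :: "'a namon \<Rightarrow> 'a lincomb" where
  "anticomm_lincomb (NV x) = [(1, NV x)]"
| "anticomm_lincomb (NM a b) =
     lincomb_prod (anticomm_lincomb a) (anticomm_lincomb b) @
     lincomb_prod (anticomm_lincomb b) (anticomm_lincomb a)"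

lemma namon_eval_map_namon: "namon_eval mul \<sigma> (map_namon g t) = namon_eval mul (\<sigma> \<circ> g) t"
  by (induction t) auto

lemma namon_eval_anticomm:
  "namon_eval na_anticomm (\<lambda>v. na_var (\<iota> v)) m = lincomb_poly (lincomb_map \<iota> (anticomm_lincomb m))"
  by (induction m) (simp_all add: na_var_def na_anticomm_def na_mul_lincomb_poly lincomb_map_prod)

lemma anticomm_certificate:
  "\<forall>ss\<in>set (small_shape_lists 1). \<forall>s\<in>set ss.
     cancels_mod_comm (proj_lincomb (anticomm_lincomb s) @ [(-48, s)])"
  by code_simp

lemma proj_coeff_anticomm_mon:
  fixes \<iota> :: "'v \<Rightarrow> 'x"
  assumes "namon_deg m \<le> 4" and "\<And>v. v \<in> set_namon m \<Longrightarrow> \<rho> (\<iota> v) = v"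
  shows "proj_coeff \<rho> K (namon_eval na_anticomm (\<lambda>v. na_var (\<iota> v)) m) =
    (if comm_equiv m K then 48 else 0 :: 'k::field)"
proof -
  have "\<exists>g. \<exists>ss\<in>set (small_shape_lists 1). [m] = map (map_namon g) ss"
    using small_shape_lists_relabel[of "[m]"] assms(1) by simp
  then obtain g ss where ss: "ss \<in> set (small_shape_lists 1)" and m: "[m] = map (map_namon g) ss"
    by (elim exE bexE)
  then obtain s where "ss = [s]" and m_eq: "m = map_namon g s"
    by (cases ss) auto
  with ss anticomm_certificate have cancels:
    "cancels_mod_comm (proj_lincomb (anticomm_lincomb s) @ [(-48, s)])"
    by auto
  have "map_namon (\<rho> \<circ> \<iota>) m = m"
    using assms(2) by (simp add: namon.map_ident_strong)
  then have relabel: "map_namon (\<rho> \<circ> (\<iota> \<circ> g)) s = m"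
    by (simp add: m_eq namon.map_comp comp_assoc)
  have "namon_eval na_anticomm (\<lambda>v. na_var (\<iota> v)) m =
      (lincomb_poly (lincomb_map (\<iota> \<circ> g) (anticomm_lincomb s)) :: ('k, 'x) napoly)"
    by (simp add: m_eq namon_eval_map_namon namon_eval_anticomm comp_def)
  then have "proj_coeff \<rho> K (namon_eval na_anticomm (\<lambda>v. na_var (\<iota> v)) m) =
      (of_int (class_coeff K (lincomb_map (\<rho> \<circ> (\<iota> \<circ> g)) (proj_lincomb (anticomm_lincomb s)))) :: 'k)"
    by (simp add: proj_coeff_lincomb_poly proj_lincomb_map)
  also have "class_coeff K (lincomb_map (\<rho> \<circ> (\<iota> \<circ> g)) (proj_lincomb (anticomm_lincomb s))) =
      (if comm_equiv m K then 48 else 0)"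
    using class_coeff_map_eq_0_if_cancels[OF cancels, of K "\<rho> \<circ> (\<iota> \<circ> g)"] relabel
    by (cases "comm_equiv m K") (simp_all add: class_coeff_def)
  finally show ?thesis by simp
qed

lemma proj_coeff_anticomm_eval:
  assumes "na_deg_le f 4"
    and "\<And>m v. m \<in> Poly_Mapping.keys f \<Longrightarrow> v \<in> set_namon m \<Longrightarrow> \<rho> (\<iota> v) = v"
  shows "proj_coeff \<rho> K (na_eval na_anticomm (\<lambda>v. na_var (\<iota> v)) f) = 48 * comm_class_sum f K"
proof -
  have "proj_coeff \<rho> K (na_eval na_anticomm (\<lambda>v. na_var (\<iota> v)) f) =
      (\<Sum>m\<in>Poly_Mapping.keys f. Poly_Mapping.lookup f m *
         proj_coeff \<rho> K (namon_eval na_anticomm (\<lambda>v. na_var (\<iota> v)) m))"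
    by (simp add: na_eval_def proj_coeff_sum proj_coeff_smult)
  also have "\<dots> = (\<Sum>m\<in>Poly_Mapping.keys f.
      Poly_Mapping.lookup f m * (if comm_equiv m K then 48 else 0))"
    using assms by (intro sum.cong refl) (simp add: na_deg_le_def proj_coeff_anticomm_mon)
  also have "\<dots> = 48 * comm_class_sum f K"
    by (simp add: comm_class_sum_def sum_distrib_left sum.inter_filter if_distrib mult.commute
        cong: if_cong)
  finally show ?thesis .
qed

lemma obtain_inj_on_into_infinite:
  assumes "finite A" and "infinite (UNIV :: 'b set)"
  obtains \<iota> :: "'a \<Rightarrow> 'b" where "inj_on \<iota> A"
proof -
  obtain B :: "'b set" where "finite B" "card B = card A"
    using infinite_arbitrarily_large[OF assms(2)] by blast
  then show ?thesis
    using card_le_inj[OF assms(1) \<open>finite B\<close>] that by auto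
qed

theorem mainTheorem9:
  fixes f :: "('k::field_char_0, 'v) napoly"
  assumes "infinite (UNIV :: 'x set)"
    and "na_deg_le f 4"
    and "is_identity_LSB1_anticomm TYPE('x) f"
  shows "consequence_of_comm f"
proof -
  let ?V = "\<Union>m\<in>Poly_Mapping.keys f. set_namon m"
  have "finite ?V"
    by simp
  then obtain \<iota> :: "'v \<Rightarrow> 'x" where "inj_on \<iota> ?V"
    using assms(1) by (rule obtain_inj_on_into_infinite)
  define \<rho> where "\<rho> = inv_into ?V \<iota>"
  have \<rho>_\<iota>: "\<rho> (\<iota> v) = v" if "m \<in> Poly_Mapping.keys f" "v \<in> set_namon m" for m v
    using inv_into_f_f[OF \<open>inj_on \<iota> ?V\<close>] that by (auto simp: \<rho>_def)
  have "comm_class_sum f K = 0" for K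
  proof -
    have "na_eval na_anticomm (\<lambda>v. na_var (\<iota> v)) f \<in> LSB1_rel"
      using assms(3) by (simp add: is_identity_LSB1_anticomm_def)
    then have "proj_coeff \<rho> K (na_eval na_anticomm (\<lambda>v. na_var (\<iota> v)) f) = 0"
      by (rule proj_coeff_LSB1_rel)
    then show ?thesis
      using proj_coeff_anticomm_eval[of f \<rho> \<iota> K] assms(2) \<rho>_\<iota> by simp
  qed
  then show ?thesis
    by (rule consequence_of_comm_if_comm_class_sums_eq_0)
qed

end
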